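(* Let $X$ be one of the Killing vector fields $\partial_x$, $\partial_\theta$, $x\partial_x+y\partial_y$, $\frac12(x^2-y^2)\partial_x+xy\partial_y$ of $\mathrm{SL}(2,\mathbb R)$. Then every $\mathcal A$-invariant $X$-translator is a surface of type $\Sigma_{x_0}$ or of type $\Sigma_{\theta_0}$ (depending on $X$).
   Context: $\mathrm{SL}(2,\mathbb R)$ is given global coordinates $(x,y,\theta)\in\mathbb R\times(0,\infty)\times\mathbb R$ via $(x,y,\theta)\mapsto \begin{pmatrix}1&x\\0&1\end{pmatrix}\begin{pmatrix}\sqrt y&0\\0&1/\sqrt y\end{pmatrix}\begin{pmatrix}\cos\theta&\sin\theta\\-\sin\theta&\cos\theta\end{pmatrix}$, with the metric $\langle\,,\rangle=\frac{dx^2+dy^2}{4y^2}+\left(d\theta+\frac{dx}{2y}\right)^2$. Orthonormal frame: $e_1=2y\partial_x-\partial_\theta$, $e_2=2y\partial_y$, $e_3=\partial_\theta$. A surface with unit normal $N$ and mean curvature $H$ (average of principal curvatures w.r.t. $N$) is an $X$-translator if $H=\langle N,X\rangle$. $\mathcal A$-invariant surfaces are those parametrized as $(s,t)\mapsto(x(s),t,\theta(s))$, $t>0$, with regular generating curve $(x(s),\theta(s))$; for them $N=\frac1\Phi(-(x'+2t\theta')e_1+x'e_3)$ and $H=\frac{2t^2}{\Phi^3}(x'\theta''-\theta'x'')$, $\Phi=\sqrt{(x'+2t\theta')^2+x'^2}$. For constants $x_0,\theta_0$: $\Sigma_{x_0}=\{x=x_0\}$, $\Sigma_{\theta_0}=\{\theta=\theta_0\}$.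 *)

theory Defs
  imports "HOL-Analysis.Analysis"
begin

text \<open>Points of SL(2,R) in the global coordinates (x, y, theta), y > 0, and tangent
vectors in coordinate components (a, b, c) meaning a d/dx + b d/dy + c d/dtheta.\<close>

type_synonym vec3 = "real \<times> real \<times> real"

definition sl2_metric :: "vec3 \<Rightarrow> vec3 \<Rightarrow> vec3 \<Rightarrow> real" where
  "sl2_metric p u v =
     (case p of (x, y, th) \<Rightarrow> case u of (u1, u2, u3) \<Rightarrow> case v of (v1, v2, v3) \<Rightarrow>
        (u1 * v1 + u2 * v2) / (4 * y^2) + (u3 + u1 / (2 * y)) * (v3 + v1 / (2 * y)))"

definition frame_e1 :: "vec3 \<Rightarrow> vec3" where
  "frame_e1 p = (case p of (x, y, th) \<Rightarrow> (2 * y, 0, -1))"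
definition frame_e2 :: "vec3 \<Rightarrow> vec3" where
  "frame_e2 p = (case p of (x, y, th) \<Rightarrow> (0, 2 * y, 0))"
definition frame_e3 :: "vec3 \<Rightarrow> vec3" where
  "frame_e3 p = (0, 0, 1)"

definition killing_dx :: "vec3 \<Rightarrow> vec3" where
  "killing_dx p = (1, 0, 0)"
definition killing_dtheta :: "vec3 \<Rightarrow> vec3" where
  "killing_dtheta p = (0, 0, 1)"
definition killing_dil :: "vec3 \<Rightarrow> vec3" where
  "killing_dil p = (case p of (x, y, th) \<Rightarrow> (x, y, 0))"
definition killing_par :: "vec3 \<Rightarrow> vec3" where
  "killing_par p = (case p of (x, y, th) \<Rightarrow> ((x^2 - y^2) / 2, x * y, 0))"

text \<open>Data of an A-invariant surface (s,t) -> (x(s), t, theta(s)), t > 0, in terms of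
the first derivatives x1 = x', th1 = theta' and second derivatives x2, th2 at s.\<close>
definition ainv_Phi :: "real \<Rightarrow> real \<Rightarrow> real \<Rightarrow> real" where
  "ainv_Phi x1 th1 t = sqrt ((x1 + 2 * t * th1)^2 + x1^2)"

definition ainv_normal :: "real \<Rightarrow> real \<Rightarrow> real \<Rightarrow> vec3 \<Rightarrow> vec3" where
  "ainv_normal x1 th1 t p =
     (1 / ainv_Phi x1 th1 t) *\<^sub>R (( - (x1 + 2 * t * th1)) *\<^sub>R frame_e1 p + x1 *\<^sub>R frame_e3 p)"

definition ainv_H :: "real \<Rightarrow> real \<Rightarrow> real \<Rightarrow> real \<Rightarrow> real \<Rightarrow> real" where
  "ainv_H x1 th1 x2 th2 t = 2 * t^2 / (ainv_Phi x1 th1 t)^3 * (x1 * th2 - th1 * x2)"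

definition ainv_surface :: "real set \<Rightarrow> (real \<Rightarrow> real) \<Rightarrow> (real \<Rightarrow> real) \<Rightarrow> vec3 set" where
  "ainv_surface I x th = {(x s, t, th s) | s t. s \<in> I \<and> t > 0}"

definition ainv_translator ::
  "(vec3 \<Rightarrow> vec3) \<Rightarrow> real set \<Rightarrow> (real \<Rightarrow> real) \<Rightarrow> (real \<Rightarrow> real) \<Rightarrow>
   (real \<Rightarrow> real) \<Rightarrow> (real \<Rightarrow> real) \<Rightarrow> (real \<Rightarrow> real) \<Rightarrow> (real \<Rightarrow> real) \<Rightarrow> bool" where
  "ainv_translator X I x th x1 th1 x2 th2 \<longleftrightarrow>
     (\<forall>s\<in>I. \<forall>t>0. let p = (x s, t, th s) in
        ainv_H (x1 s) (th1 s) (x2 s) (th2 s) t =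
          sl2_metric p (ainv_normal (x1 s) (th1 s) t p) (X p))"

definition Sigma_x :: "real \<Rightarrow> vec3 set" where
  "Sigma_x x0 = {(x0, y, th) | y th. y > 0}"
definition Sigma_theta :: "real \<Rightarrow> vec3 set" where
  "Sigma_theta th0 = {(x, y, th0) | x y. y > 0}"

end

theory Submission
  imports Defs "HOL-Computational_Algebra.Polynomial"
begin

text \<open>For an \<open>\<A>\<close>-invariant surface \<open>\<langle>N, X\<rangle> = (x' X\<^sub>\<theta> - \<theta>' X\<^sub>x) / \<Phi>\<close> and
\<open>H = 2 t\<^sup>2 (x' \<theta>'' - \<theta>' x'') / \<Phi>\<^sup>3\<close>, so multiplying by \<open>\<Phi>\<^sup>3\<close> turns the translator equation
at a fixed parameter \<open>s\<close> into a polynomial identity in the height \<open>t > 0\<close>, whose coefficients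
must all vanish. For the four Killing fields one coefficient gives, respectively,
\<open>\<theta>' x'\<^sup>2 = 0\<close>, \<open>x'\<^sup>3 = 0\<close>, \<open>x \<theta>' x'\<^sup>2 = 0\<close> and \<open>\<theta>'\<^sup>3 = 0\<close>. In the dilation case
\<open>x\<close> vanishes on the open set where \<open>x' \<theta>' \<noteq> 0\<close>, so \<open>x' = 0\<close> there and that set is empty.
Finally \<open>x' \<theta>' \<equiv> 0\<close> with \<open>(x', \<theta>') \<noteq> 0\<close> on a connected interval forces \<open>x' \<equiv> 0\<close> or
\<open>\<theta>' \<equiv> 0\<close>, i.e. the surface lies in some \<open>\<Sigma>\<^sub>x\<^sub>0\<close> or some \<open>\<Sigma>\<^sub>\<theta>\<^sub>0\<close>.\<close>

lemma poly_eq_0_if_vanishes_on_pos: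
  fixes p :: "real poly"
  assumes "\<And>t. t > 0 \<Longrightarrow> poly p t = 0"
  shows "p = 0"
proof (rule ccontr)
  assume "p \<noteq> 0"
  then have "finite {t. poly p t = 0}" by (rule poly_roots_finite)
  moreover have "{0<..} \<subseteq> {t. poly p t = 0}" using assms by auto
  ultimately show False using infinite_Ioi finite_subset by blast
qed

lemma connected_mult_eq_0_cases:
  fixes f g :: "'a::topological_space \<Rightarrow> real"
  assumes "connected S" "open S" "continuous_on S f" "continuous_on S g"
    and "\<And>s. s \<in> S \<Longrightarrow> f s * g s = 0" "\<And>s. s \<in> S \<Longrightarrow> f s \<noteq> 0 \<or> g s \<noteq> 0"
  shows "(\<forall>s\<in>S. f s = 0) \<or> (\<forall>s\<in>S. g s = 0)"
proof -
  have "open (S \<inter> f -` (- {0}))" "open (S \<inter> g -` (- {0}))"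
    using assms(2-4) by (auto intro: continuous_open_preimage)
  then have "S \<inter> f -` (- {0}) \<inter> S = {} \<or> S \<inter> g -` (- {0}) \<inter> S = {}"
    by (rule connectedD[OF assms(1)]) (use assms(5,6) in auto)
  then show ?thesis by auto
qed

lemma has_real_derivative_eq_0_if_vanishes_on_open:
  assumes "(f has_real_derivative f') (at s)" "open U" "s \<in> U" "\<And>u. u \<in> U \<Longrightarrow> f u = 0"
  shows "f' = 0"
proof -
  have "((\<lambda>_. 0) has_real_derivative f') (at s)"
    using has_field_derivative_transform_within_open[OF assms(1-3)] assms(4) by metis
  then show ?thesis using DERIV_const DERIV_unique by blast
qed

lemma sl2_metric_ainv_normal:
  assumes "t \<noteq> 0"
  shows "sl2_metric (a, t, b) (ainv_normal x1 th1 t (a, t, b)) (v1, v2, v3) =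
    (x1 * v3 - th1 * v1) / ainv_Phi x1 th1 t"
proof -
  obtain \<Phi> where "ainv_Phi x1 th1 t = \<Phi>" by blast
  with assms show ?thesis
    by (cases "\<Phi> = 0")
      (simp_all add: sl2_metric_def ainv_normal_def frame_e1_def frame_e3_def field_simps power2_eq_square)
qed

lemma ainv_Phi_pos:
  assumes "x1 \<noteq> 0 \<or> th1 \<noteq> 0" "t > 0"
  shows "ainv_Phi x1 th1 t > 0"
  using assms by (cases "x1 = 0") (simp_all add: ainv_Phi_def add_nonneg_pos)

definition translator_at ::
  "(vec3 \<Rightarrow> vec3) \<Rightarrow> real \<Rightarrow> real \<Rightarrow> real \<Rightarrow> real \<Rightarrow> real \<Rightarrow> real \<Rightarrow> bool" where
  "translator_at X a b x1 th1 x2 th2 \<longleftrightarrow>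
     (\<forall>t>0. ainv_H x1 th1 x2 th2 t = sl2_metric (a, t, b) (ainv_normal x1 th1 t (a, t, b)) (X (a, t, b)))"

lemma ainv_translator_iff_translator_at:
  "ainv_translator X I x th x1 th1 x2 th2 \<longleftrightarrow>
     (\<forall>s\<in>I. translator_at X (x s) (th s) (x1 s) (th1 s) (x2 s) (th2 s))"
  by (simp add: ainv_translator_def translator_at_def Let_def)

lemma translator_at_polynomial:
  assumes "translator_at X a b x1 th1 x2 th2" "x1 \<noteq> 0 \<or> th1 \<noteq> 0" "t > 0"
    and "X (a, t, b) = (v1, v2, v3)"
  shows "2 * t^2 * (x1 * th2 - th1 * x2) = (x1 * v3 - th1 * v1) * ((x1 + 2 * t * th1)^2 + x1^2)"
proof -
  define \<Phi> where "\<Phi> = ainv_Phi x1 th1 t"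
  have "\<Phi> > 0" using ainv_Phi_pos[OF assms(2,3)] by (simp add: \<Phi>_def)
  have eq: "2 * t^2 / \<Phi>^3 * (x1 * th2 - th1 * x2) = (x1 * v3 - th1 * v1) / \<Phi>"
    using assms(1,3,4) sl2_metric_ainv_normal[of t]
    by (simp add: translator_at_def ainv_H_def \<Phi>_def)
  have "2 * t^2 * (x1 * th2 - th1 * x2) = 2 * t^2 / \<Phi>^3 * (x1 * th2 - th1 * x2) * \<Phi>^3"
    using \<open>\<Phi> > 0\<close> by simp
  also have "\<dots> = (x1 * v3 - th1 * v1) * \<Phi>^2"
    unfolding eq using \<open>\<Phi> > 0\<close> by (simp add: power3_eq_cube power2_eq_square)
  also have "\<Phi>^2 = (x1 + 2 * t * th1)^2 + x1^2"
    by (simp add: \<Phi>_def ainv_Phi_def)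
  finally show ?thesis .
qed

lemma translator_at_killing_dx:
  assumes "translator_at killing_dx a b x1 th1 x2 th2" "x1 \<noteq> 0 \<or> th1 \<noteq> 0"
  shows "x1 * th1 = 0"
proof -
  have "poly [:2 * th1 * x1^2, 4 * th1^2 * x1, 2 * (x1 * th2 - th1 * x2) + 4 * th1^3:] t = 0"
    if "t > 0" for t
    using translator_at_polynomial[OF assms that] by (simp add: killing_dx_def) algebra
  then have "[:2 * th1 * x1^2, 4 * th1^2 * x1, 2 * (x1 * th2 - th1 * x2) + 4 * th1^3:] = 0"
    by (rule poly_eq_0_if_vanishes_on_pos)
  then show ?thesis by auto
qed

lemma translator_at_killing_dtheta:
  assumes "translator_at killing_dtheta a b x1 th1 x2 th2" "x1 \<noteq> 0 \<or> th1 \<noteq> 0"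
  shows "x1 = 0"
proof -
  have "poly [:2 * x1^3, 4 * x1^2 * th1, 4 * x1 * th1^2 - 2 * (x1 * th2 - th1 * x2):] t = 0"
    if "t > 0" for t
    using translator_at_polynomial[OF assms that] by (simp add: killing_dtheta_def) algebra
  then have "[:2 * x1^3, 4 * x1^2 * th1, 4 * x1 * th1^2 - 2 * (x1 * th2 - th1 * x2):] = 0"
    by (rule poly_eq_0_if_vanishes_on_pos)
  then show ?thesis by auto
qed

lemma translator_at_killing_dil:
  assumes "translator_at killing_dil a b x1 th1 x2 th2" "x1 \<noteq> 0 \<or> th1 \<noteq> 0"
  shows "a * x1 * th1 = 0"
proof -
  have "poly [:2 * a * th1 * x1^2, 4 * a * th1^2 * x1, 2 * (x1 * th2 - th1 * x2) + 4 * a * th1^3:] t = 0"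
    if "t > 0" for t
    using translator_at_polynomial[OF assms that] by (simp add: killing_dil_def) algebra
  then have "[:2 * a * th1 * x1^2, 4 * a * th1^2 * x1, 2 * (x1 * th2 - th1 * x2) + 4 * a * th1^3:] = 0"
    by (rule poly_eq_0_if_vanishes_on_pos)
  then show ?thesis by auto
qed

lemma translator_at_killing_par:
  assumes "translator_at killing_par a b x1 th1 x2 th2" "x1 \<noteq> 0 \<or> th1 \<noteq> 0"
  shows "th1 = 0"
proof -
  define D where "D = x1 * th2 - th1 * x2"
  have "poly [:2 * a^2 * x1^2 * th1, 4 * a^2 * x1 * th1^2, 4 * a^2 * th1^3 - 2 * x1^2 * th1 + 4 * D,
      - 4 * x1 * th1^2, - 4 * th1^3:] t = 0"
    if "t > 0" for t
    using translator_at_polynomial[OF assms that, of "(a^2 - t^2) / 2" "a * t" 0]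
    by (simp add: killing_par_def D_def) algebra
  then have "[:2 * a^2 * x1^2 * th1, 4 * a^2 * x1 * th1^2, 4 * a^2 * th1^3 - 2 * x1^2 * th1 + 4 * D,
      - 4 * x1 * th1^2, - 4 * th1^3:] = 0"
    by (rule poly_eq_0_if_vanishes_on_pos)
  then show ?thesis by auto
qed

locale regular_profile_curve =
  fixes I :: "real set" and x th x1 th1 :: "real \<Rightarrow> real"
  assumes open_I: "open I" and connected_I: "connected I"
    and x_deriv: "\<And>s. s \<in> I \<Longrightarrow> (x has_real_derivative x1 s) (at s)"
    and th_deriv: "\<And>s. s \<in> I \<Longrightarrow> (th has_real_derivative th1 s) (at s)"
    and continuous_x1: "continuous_on I x1" and continuous_th1: "continuous_on I th1"
    and regular: "\<And>s. s \<in> I \<Longrightarrow> x1 s \<noteq> 0 \<or> th1 s \<noteq> 0"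
begin

lemma x1_or_th1_vanishes_if_product_does:
  assumes "\<And>s. s \<in> I \<Longrightarrow> x1 s * th1 s = 0"
  shows "(\<forall>s\<in>I. x1 s = 0) \<or> (\<forall>s\<in>I. th1 s = 0)"
  by (rule connected_mult_eq_0_cases[OF connected_I open_I continuous_x1 continuous_th1 assms regular])

lemma product_vanishes_if_x_times_product_does:
  assumes "\<And>s. s \<in> I \<Longrightarrow> x s * x1 s * th1 s = 0"
  shows "\<And>s. s \<in> I \<Longrightarrow> x1 s * th1 s = 0"
proof (rule ccontr)
  fix s assume "s \<in> I" "x1 s * th1 s \<noteq> 0"
  define U where "U = I \<inter> (\<lambda>s. x1 s * th1 s) -` (- {0})"
  have "open U"
    unfolding U_def using open_I continuous_x1 continuous_th1
    by (intro continuous_open_preimage continuous_intros) auto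
  moreover have "s \<in> U" "U \<subseteq> I" using \<open>s \<in> I\<close> \<open>x1 s * th1 s \<noteq> 0\<close> by (auto simp: U_def)
  moreover have "\<And>u. u \<in> U \<Longrightarrow> x u = 0" using assms by (auto simp: U_def)
  ultimately have "x1 s = 0"
    using has_real_derivative_eq_0_if_vanishes_on_open x_deriv by blast
  with \<open>x1 s * th1 s \<noteq> 0\<close> show False by simp
qed

lemma killing_translator_x1_or_th1_vanishes:
  assumes "X \<in> {killing_dx, killing_dtheta, killing_dil, killing_par}"
    and "\<And>s. s \<in> I \<Longrightarrow> translator_at X (x s) (th s) (x1 s) (th1 s) (x2 s) (th2 s)"
  shows "(\<forall>s\<in>I. x1 s = 0) \<or> (\<forall>s\<in>I. th1 s = 0)"
  using assms(1)
proof (elim insertE emptyE)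
  assume "X = killing_dx"
  then show ?thesis
    using assms(2) regular translator_at_killing_dx x1_or_th1_vanishes_if_product_does by metis
next
  assume "X = killing_dtheta"
  then show ?thesis using assms(2) regular translator_at_killing_dtheta by metis
next
  assume "X = killing_dil"
  then show ?thesis
    using assms(2) regular translator_at_killing_dil product_vanishes_if_x_times_product_does
      x1_or_th1_vanishes_if_product_does by metis
next
  assume "X = killing_par"
  then show ?thesis using assms(2) regular translator_at_killing_par by metis
qed

lemma ainv_surface_in_Sigma_x:
  assumes "\<forall>s\<in>I. x1 s = 0"
  shows "\<exists>x0. ainv_surface I x th \<subseteq> Sigma_x x0"
proof -
  have "x constant_on I"
    using assms x_deriv has_field_derivative_0_imp_constant_on connected_I open_I by metis
  then show ?thesis by (auto simp: constant_on_def ainv_surface_def Sigma_x_def)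
qed

lemma ainv_surface_in_Sigma_theta:
  assumes "\<forall>s\<in>I. th1 s = 0"
  shows "\<exists>th0. ainv_surface I x th \<subseteq> Sigma_theta th0"
proof -
  have "th constant_on I"
    using assms th_deriv has_field_derivative_0_imp_constant_on connected_I open_I by metis
  then show ?thesis by (auto simp: constant_on_def ainv_surface_def Sigma_theta_def)
qed

end

theorem mainTheorem7:
  fixes X :: "vec3 \<Rightarrow> vec3" and I :: "real set"
    and x th x1 th1 x2 th2 :: "real \<Rightarrow> real"
  assumes X: "X \<in> {killing_dx, killing_dtheta, killing_dil, killing_par}"
    and I: "open I" "connected I"
    and dx: "\<forall>s\<in>I. (x has_real_derivative x1 s) (at s)"
    and dx1: "\<forall>s\<in>I. (x1 has_real_derivative x2 s) (at s)"
    and dth: "\<forall>s\<in>I. (th has_real_derivative th1 s) (at s)"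
    and dth1: "\<forall>s\<in>I. (th1 has_real_derivative th2 s) (at s)"
    and regular: "\<forall>s\<in>I. x1 s \<noteq> 0 \<or> th1 s \<noteq> 0"
    and transl: "ainv_translator X I x th x1 th1 x2 th2"
  shows "(\<exists>x0. ainv_surface I x th \<subseteq> Sigma_x x0) \<or>
         (\<exists>th0. ainv_surface I x th \<subseteq> Sigma_theta th0)"
proof -
  interpret regular_profile_curve I x th x1 th1
  proof
    show "continuous_on I x1" "continuous_on I th1"
      using dx1 dth1 by (auto intro!: continuous_at_imp_continuous_on DERIV_isCont)
  qed (use I dx dth regular in auto)
  have "(\<forall>s\<in>I. x1 s = 0) \<or> (\<forall>s\<in>I. th1 s = 0)"
    using killing_translator_x1_or_th1_vanishes[OF X] transl
    unfolding ainv_translator_iff_translator_at by blast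
  then show ?thesis using ainv_surface_in_Sigma_x ainv_surface_in_Sigma_theta by blast
qed

end
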